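(* Let $G$ be an unweighted loopless graph on vertex set $[n]$ and let $t\ge 2$. Suppose that for all $\mathbf{a},\mathbf{b}\in\{0,1\}^n$, \[ V_{K_{t-1}}(\mathbf{a},\dots,\mathbf{a};G)\, V_{K_{t-1}}(\mathbf{b},\dots,\mathbf{b};G)\le \sum_{\phi:[t-1]\times\{1,2\}\to[n]}\ \prod_{\substack{i,j\in[t-1]\\ i\ne j}}G(\phi(i,1),\phi(j,2))\prod_{i\in[t-1]}a_{\phi(i,1)}b_{\phi(i,2)}. \] Then $\hom(K_t,G)^2\le\hom(K_t\times K_2,G)$.
   Context: $G(u,v)\in\{0,1\}$ is the adjacency indicator of $G$. For $s\ge1$ and $\mathbf{x}\in\mathbb{R}^n$, $V_{K_s}(\mathbf{x},\dots,\mathbf{x};G)=\sum_{\phi:[s]\to[n]}\prod_{\{i,j\}\in\binom{[s]}{2}}G(\phi(i),\phi(j))\prod_{r\in[s]}x_{\phi(r)}$ (an empty product is $1$). $\hom(H,G)$ is the number of homomorphisms from $H$ to $G$. The tensor product $K_t\times K_2$ has vertex set $[t]\times\{1,2\}$ with $(i,1)$ adjacent to $(j,2)$ iff $i\ne j$. *)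

theory Defs
  imports Complex_Main "HOL-Library.FuncSet"
begin

text \<open>Vertex set [n] is rendered as {..<n}. A graph is an adjacency predicate
G :: nat => nat => bool; only its values on {..<n} matter.\<close>

definition loopless_graph :: "nat \<Rightarrow> (nat \<Rightarrow> nat \<Rightarrow> bool) \<Rightarrow> bool" where
  "loopless_graph n G \<longleftrightarrow> (\<forall>u<n. \<forall>v<n. G u v = G v u) \<and> (\<forall>u<n. \<not> G u u)"

definition adjw :: "(nat \<Rightarrow> nat \<Rightarrow> bool) \<Rightarrow> nat \<Rightarrow> nat \<Rightarrow> real" where
  "adjw G u v = (if G u v then 1 else 0)"

definition VK :: "nat \<Rightarrow> nat \<Rightarrow> (nat \<Rightarrow> nat \<Rightarrow> bool) \<Rightarrow> (nat \<Rightarrow> real) \<Rightarrow> real" where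
  "VK n s G x = (\<Sum>\<phi>\<in>{..<s} \<rightarrow>\<^sub>E {..<n}.
      (\<Prod>p\<in>{(i,j). i < j \<and> j < s}. adjw G (\<phi> (fst p)) (\<phi> (snd p))) * (\<Prod>r<s. x (\<phi> r)))"

definition hom_count :: "'a set \<Rightarrow> ('a \<Rightarrow> 'a \<Rightarrow> bool) \<Rightarrow> nat \<Rightarrow> (nat \<Rightarrow> nat \<Rightarrow> bool) \<Rightarrow> nat" where
  "hom_count VH EH n G = card {\<phi> \<in> VH \<rightarrow>\<^sub>E {..<n}. \<forall>u\<in>VH. \<forall>v\<in>VH. EH u v \<longrightarrow> G (\<phi> u) (\<phi> v)}"

definition K_verts :: "nat \<Rightarrow> nat set" where "K_verts t = {..<t}"
definition K_adj :: "nat \<Rightarrow> nat \<Rightarrow> bool" where "K_adj i j \<longleftrightarrow> i \<noteq> j"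

definition KK2_verts :: "nat \<Rightarrow> (nat \<times> nat) set" where "KK2_verts t = {..<t} \<times> {1,2}"
definition KK2_adj :: "nat \<times> nat \<Rightarrow> nat \<times> nat \<Rightarrow> bool" where
  "KK2_adj p q \<longleftrightarrow> fst p \<noteq> fst q \<and> snd p \<noteq> snd q"

end

theory Submission
  imports Defs
begin

(* Fixing the image v of one vertex of K_t, a homomorphism K_t -> G is a labelled (t-1)-clique
   in the neighbourhood N(v), and these are counted by V_{K_{t-1}}(1_{N(v)}).  Likewise, fixing the
   images w and v of the two copies of that vertex in K_t x K_2, a homomorphism K_t x K_2 -> G is a
   homomorphism of K_{t-1} x K_2 with one side in N(v) and the other in N(w), counted by the
   right-hand side of the hypothesis for a = 1_{N(v)}, b = 1_{N(w)}.  Expanding hom(K_t, G)^2 as a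
   double sum over v and w and applying the hypothesis termwise gives the claim. *)

lemma prod_of_bool:
  assumes "finite A"
  shows "(\<Prod>x\<in>A. of_bool (P x) :: 'a::comm_semiring_1) = of_bool (\<forall>x\<in>A. P x)"
  using assms by (induction A rule: finite_induct) auto

lemma adjw_eq_of_bool: "adjw G u v = of_bool (G u v)"
  by (simp add: adjw_def)

lemma card_PiE_insert_filter:
  assumes "x \<notin> S" "finite S" "\<And>i. i \<in> insert x S \<Longrightarrow> finite (T i)"
  shows "card {f \<in> Pi\<^sub>E (insert x S) T. P f} = (\<Sum>y\<in>T x. card {g \<in> Pi\<^sub>E S T. P (g(x := y))})"
proof -
  let ?upd = "\<lambda>(y, g). g(x := y)"
  let ?Sigma = "SIGMA y:T x. {g \<in> Pi\<^sub>E S T. P (g(x := y))}"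
  have "{f \<in> Pi\<^sub>E (insert x S) T. P f} = ?upd ` ?Sigma"
    by (auto simp: PiE_insert_eq)
  moreover have "inj_on ?upd ?Sigma"
    by (rule inj_on_subset[OF inj_combinator[OF assms(1)]]) auto
  ultimately show ?thesis
    using assms by (simp add: card_image finite_PiE)
qed

definition nbr_cliques :: "nat \<Rightarrow> nat \<Rightarrow> (nat \<Rightarrow> nat \<Rightarrow> bool) \<Rightarrow> nat \<Rightarrow> (nat \<Rightarrow> nat) set" where
  "nbr_cliques n s G v = {\<phi> \<in> {..<s} \<rightarrow>\<^sub>E {..<n}.
     (\<forall>i j. i < j \<and> j < s \<longrightarrow> G (\<phi> i) (\<phi> j)) \<and> (\<forall>r<s. G v (\<phi> r))}"

lemma VK_adjw_eq_card: "VK n s G (adjw G v) = card (nbr_cliques n s G v)"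
proof -
  have "finite {(i, j). i < j \<and> j < s}"
    by (rule finite_subset[of _ "{..<s} \<times> {..<s}"]) auto
  then show ?thesis
    unfolding VK_def nbr_cliques_def adjw_eq_of_bool
    by (simp add: prod_of_bool of_bool_conj[symmetric] finite_PiE Int_def Ball_def)
qed

lemma K_hom_iff:
  assumes sym: "\<forall>u<n. \<forall>v<n. G u v = G v u" and \<phi>: "\<phi> \<in> K_verts t \<rightarrow>\<^sub>E {..<n}"
  shows "(\<forall>u\<in>K_verts t. \<forall>v\<in>K_verts t. K_adj u v \<longrightarrow> G (\<phi> u) (\<phi> v)) \<longleftrightarrow>
    (\<forall>i j. i < j \<and> j < t \<longrightarrow> G (\<phi> i) (\<phi> j))"
proof -
  have "\<phi> i < n" if "i < t" for i
    using \<phi> that by (auto simp: K_verts_def)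
  then show ?thesis
    unfolding K_verts_def K_adj_def
    by (auto simp: PiE_iff) (metis linorder_neqE_nat sym)
qed

lemma hom_count_K_Suc:
  assumes sym: "\<forall>u<n. \<forall>v<n. G u v = G v u"
  shows "hom_count (K_verts (Suc s)) K_adj n G = (\<Sum>v<n. card (nbr_cliques n s G v))"
proof -
  have "hom_count (K_verts (Suc s)) K_adj n G =
      card {\<phi> \<in> K_verts (Suc s) \<rightarrow>\<^sub>E {..<n}. \<forall>i j. i < j \<and> j < Suc s \<longrightarrow> G (\<phi> i) (\<phi> j)}"
    unfolding hom_count_def using K_hom_iff[OF sym] by (simp cong: conj_cong)
  also have "\<dots> = (\<Sum>v<n. card {\<psi> \<in> {..<s} \<rightarrow>\<^sub>E {..<n}.
      \<forall>i j. i < j \<and> j < Suc s \<longrightarrow> G ((\<psi>(s := v)) i) ((\<psi>(s := v)) j)})"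
    unfolding K_verts_def lessThan_Suc by (rule card_PiE_insert_filter) auto
  also have "\<dots> = (\<Sum>v<n. card (nbr_cliques n s G v))"
  proof (rule sum.cong[OF refl], rule arg_cong[where f = card])
    fix v assume "v \<in> {..<n}"
    have "(\<forall>i j. i < j \<and> j < Suc s \<longrightarrow> G ((\<psi>(s := v)) i) ((\<psi>(s := v)) j)) \<longleftrightarrow>
        (\<forall>i j. i < j \<and> j < s \<longrightarrow> G (\<psi> i) (\<psi> j)) \<and> (\<forall>r<s. G v (\<psi> r))"
      if \<psi>: "\<psi> \<in> {..<s} \<rightarrow>\<^sub>E {..<n}" for \<psi>
    proof -
      have "G (\<psi> r) v \<longleftrightarrow> G v (\<psi> r)" if "r < s" for r
        using sym \<open>v \<in> {..<n}\<close> PiE_mem[OF \<psi>, of r] that by simp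
      then show ?thesis
        by (auto simp: less_Suc_eq)
    qed
    then show "{\<psi> \<in> {..<s} \<rightarrow>\<^sub>E {..<n}.
      \<forall>i j. i < j \<and> j < Suc s \<longrightarrow> G ((\<psi>(s := v)) i) ((\<psi>(s := v)) j)} = nbr_cliques n s G v"
      unfolding nbr_cliques_def by (simp cong: conj_cong)
  qed
  finally show ?thesis .
qed

definition VKK2 :: "nat \<Rightarrow> nat \<Rightarrow> (nat \<Rightarrow> nat \<Rightarrow> bool) \<Rightarrow> (nat \<Rightarrow> real) \<Rightarrow> (nat \<Rightarrow> real) \<Rightarrow> real" where
  "VKK2 n s G a b = (\<Sum>\<phi>\<in>({..<s} \<times> {1::nat,2}) \<rightarrow>\<^sub>E {..<n}.
      (\<Prod>i<s. \<Prod>j\<in>{..<s} - {i}. adjw G (\<phi> (i,1)) (\<phi> (j,2))) *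
      (\<Prod>i<s. a (\<phi> (i,1)) * b (\<phi> (i,2))))"

definition cross_nbr_cliques ::
    "nat \<Rightarrow> nat \<Rightarrow> (nat \<Rightarrow> nat \<Rightarrow> bool) \<Rightarrow> nat \<Rightarrow> nat \<Rightarrow> (nat \<times> nat \<Rightarrow> nat) set" where
  "cross_nbr_cliques n s G v w = {\<psi> \<in> ({..<s} \<times> {1::nat,2}) \<rightarrow>\<^sub>E {..<n}.
     (\<forall>i<s. \<forall>j<s. i \<noteq> j \<longrightarrow> G (\<psi> (i,1)) (\<psi> (j,2))) \<and> (\<forall>i<s. G v (\<psi> (i,1)) \<and> G w (\<psi> (i,2)))}"

lemma VKK2_adjw_eq_card: "VKK2 n s G (adjw G v) (adjw G w) = card (cross_nbr_cliques n s G v w)"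
  unfolding VKK2_def cross_nbr_cliques_def adjw_eq_of_bool
  by (simp add: prod_of_bool of_bool_conj[symmetric] finite_PiE Int_def Ball_def imp_conjL)
    (intro arg_cong[where f = card] Collect_cong conj_cong refl; blast)

lemma KK2_hom_iff:
  assumes sym: "\<forall>u<n. \<forall>v<n. G u v = G v u" and \<phi>: "\<phi> \<in> KK2_verts t \<rightarrow>\<^sub>E {..<n}"
  shows "(\<forall>p\<in>KK2_verts t. \<forall>q\<in>KK2_verts t. KK2_adj p q \<longrightarrow> G (\<phi> p) (\<phi> q)) \<longleftrightarrow>
    (\<forall>i<t. \<forall>j<t. i \<noteq> j \<longrightarrow> G (\<phi> (i,1)) (\<phi> (j,2)))"
proof
  assume "\<forall>p\<in>KK2_verts t. \<forall>q\<in>KK2_verts t. KK2_adj p q \<longrightarrow> G (\<phi> p) (\<phi> q)"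
  then show "\<forall>i<t. \<forall>j<t. i \<noteq> j \<longrightarrow> G (\<phi> (i,1)) (\<phi> (j,2))"
    by (auto simp: KK2_verts_def KK2_adj_def)
next
  assume cross: "\<forall>i<t. \<forall>j<t. i \<noteq> j \<longrightarrow> G (\<phi> (i,1)) (\<phi> (j,2))"
  have "G (\<phi> (i,a)) (\<phi> (j,b))"
    if "(i,a) \<in> KK2_verts t" "(j,b) \<in> KK2_verts t" "KK2_adj (i,a) (j,b)" for i a j b
  proof -
    have ij: "i < t" "j < t" "i \<noteq> j" and "a \<in> {1,2}" "b \<in> {1,2}" "a \<noteq> b"
      using that by (auto simp: KK2_verts_def KK2_adj_def)
    then consider "a = 1" "b = 2" | "a = 2" "b = 1"
      by auto
    then show ?thesis
    proof cases
      case 1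
      then show ?thesis using cross ij by simp
    next
      case 2
      have "\<phi> (i,2) < n" "\<phi> (j,1) < n"
        using \<phi> ij by (auto simp: KK2_verts_def PiE_iff)
      then show ?thesis using 2 cross ij sym by simp
    qed
  qed
  then show "\<forall>p\<in>KK2_verts t. \<forall>q\<in>KK2_verts t. KK2_adj p q \<longrightarrow> G (\<phi> p) (\<phi> q)"
    by auto
qed

lemma hom_count_KK2_Suc:
  assumes sym: "\<forall>u<n. \<forall>v<n. G u v = G v u"
  shows "hom_count (KK2_verts (Suc s)) KK2_adj n G =
    (\<Sum>w<n. \<Sum>v<n. card (cross_nbr_cliques n s G v w))"
proof -
  let ?hom = "\<lambda>\<phi>. \<forall>i<Suc s. \<forall>j<Suc s. i \<noteq> j \<longrightarrow> G (\<phi> (i,1)) (\<phi> (j,2))"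
  have "hom_count (KK2_verts (Suc s)) KK2_adj n G = card {\<phi> \<in> KK2_verts (Suc s) \<rightarrow>\<^sub>E {..<n}. ?hom \<phi>}"
    unfolding hom_count_def using KK2_hom_iff[OF sym] by (simp cong: conj_cong)
  also have "\<dots> = (\<Sum>w<n. \<Sum>v<n.
      card {\<psi> \<in> ({..<s} \<times> {1::nat,2}) \<rightarrow>\<^sub>E {..<n}. ?hom (\<psi>((s,2) := v, (s,1) := w))})"
  proof -
    have "KK2_verts (Suc s) = insert (s,1) (insert (s,2) ({..<s} \<times> {1::nat,2}))"
      by (auto simp: KK2_verts_def)
    then show ?thesis
      by (simp add: card_PiE_insert_filter finite_PiE)
  qed
  also have "\<dots> = (\<Sum>w<n. \<Sum>v<n. card (cross_nbr_cliques n s G v w))"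
  proof (intro sum.cong refl arg_cong[where f = card])
    fix v w assume "v \<in> {..<n}" "w \<in> {..<n}"
    have "?hom (\<psi>((s,2) := v, (s,1) := w)) \<longleftrightarrow>
        (\<forall>i<s. \<forall>j<s. i \<noteq> j \<longrightarrow> G (\<psi> (i,1)) (\<psi> (j,2))) \<and>
        (\<forall>i<s. G v (\<psi> (i,1)) \<and> G w (\<psi> (i,2)))"
      if \<psi>: "\<psi> \<in> ({..<s} \<times> {1::nat,2}) \<rightarrow>\<^sub>E {..<n}" for \<psi>
    proof -
      have "G (\<psi> (i,1)) v \<longleftrightarrow> G v (\<psi> (i,1))" if "i < s" for i
        using sym \<open>v \<in> {..<n}\<close> PiE_mem[OF \<psi>, of "(i,1)"] that by simp
      then show ?thesis
        by (auto simp: less_Suc_eq)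
    qed
    then show "{\<psi> \<in> ({..<s} \<times> {1::nat,2}) \<rightarrow>\<^sub>E {..<n}. ?hom (\<psi>((s,2) := v, (s,1) := w))} =
        cross_nbr_cliques n s G v w"
      unfolding cross_nbr_cliques_def by (simp cong: conj_cong)
  qed
  finally show ?thesis .
qed

theorem proposition4p4:
  fixes n t :: nat and G :: "nat \<Rightarrow> nat \<Rightarrow> bool"
  assumes "loopless_graph n G"
    and "t \<ge> 2"
    and hyp: "\<forall>a b :: nat \<Rightarrow> real. (\<forall>i<n. a i \<in> {0,1}) \<and> (\<forall>i<n. b i \<in> {0,1}) \<longrightarrow>
      VK n (t - 1) G a * VK n (t - 1) G b \<le>
      (\<Sum>\<phi>\<in>({..<t - 1} \<times> {1::nat,2}) \<rightarrow>\<^sub>E {..<n}.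
         (\<Prod>i<t - 1. \<Prod>j\<in>{..<t - 1} - {i}. adjw G (\<phi> (i,1)) (\<phi> (j,2))) *
         (\<Prod>i<t - 1. a (\<phi> (i,1)) * b (\<phi> (i,2))))"
  shows "real (hom_count (K_verts t) K_adj n G) ^ 2 \<le> real (hom_count (KK2_verts t) KK2_adj n G)"
proof -
  obtain s where t: "t = Suc s"
    using assms(2) by (cases t) auto
  have sym: "\<forall>u<n. \<forall>v<n. G u v = G v u"
    using assms(1) by (simp add: loopless_graph_def)
  define X where "X v = real (card (nbr_cliques n s G v))" for v
  have cross_bound: "X v * X w \<le> real (card (cross_nbr_cliques n s G v w))" for v w
  proof -
    have "VK n s G (adjw G v) * VK n s G (adjw G w) \<le> VKK2 n s G (adjw G v) (adjw G w)"
      using hyp[rule_format, of "adjw G v" "adjw G w"] unfolding VKK2_def t by (simp add: adjw_def)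
    then show ?thesis
      by (simp add: X_def VK_adjw_eq_card VKK2_adjw_eq_card)
  qed
  have "real (hom_count (K_verts t) K_adj n G) ^ 2 = (\<Sum>w<n. \<Sum>v<n. X v * X w)"
    by (simp add: t hom_count_K_Suc[OF sym] X_def power2_eq_square sum_product mult.commute)
  also have "\<dots> \<le> (\<Sum>w<n. \<Sum>v<n. real (card (cross_nbr_cliques n s G v w)))"
    by (intro sum_mono cross_bound)
  also have "\<dots> = real (hom_count (KK2_verts t) KK2_adj n G)"
    by (simp add: t hom_count_KK2_Suc[OF sym])
  finally show ?thesis .
qed

end
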